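(* Let $U$ be a representation of $\tilde W$ on which $z=-1$ acts by $-\mathrm{id}$, and let $\mathfrak u\in U$ satisfy $\tilde r_1\mathfrak u=\zeta_1^{\ell_1}\mathfrak u$ and $\tilde r_2\mathfrak u=\zeta_2^{\ell_2}\mathfrak u$, where $\ell_a\in\{1,\dots,2m_a-1\}$ are odd integers. Then for $a\in\{1,2\}$, \[ O_a^\pm\,\mathfrak u=\pm i\,Q_a(\ell_a\pm1)\,\tilde f_a\mathfrak u,\qquad O_a^\pm O_a^\mp\,\mathfrak u=Q_a(\ell_a\mp1)^2\,\mathfrak u. \]
   Context: Let $x_1,\dots,x_4$ be the standard orthonormal basis of $\mathbb R^4$, with complexification $V=\mathbb C^4$ and the bilinear extension $(\cdot,\cdot)$ of the standard inner product. Fix positive integers $m_1,m_2$ and $\zeta_a=e^{i\pi/m_a}$. Let $\alpha_p=(\sin(p\pi/m_1),-\cos(p\pi/m_1),0,0)$ ($p=1,\dots,2m_1$), $\beta_q=(0,0,\sin(q\pi/m_2),-\cos(q\pi/m_2))$ ($q=1,\dots,2m_2$), $R$ the set of these vectors, $R_+=\{\alpha_1,\dots,\alpha_{m_1},\beta_1,\dots,\beta_{m_2}\}$, and $W\cong D_{2m_1}\times D_{2m_2}$ the group generated by the reflections $s_\alpha$, $\alpha\in R$. Let $\kappa:R\to\mathbb R$ be $W$-invariant (real-valued, standing assumption). If $m_1$ is odd, $\kappa_1$ denotes the common value on all $\alpha_p$; if $m_1$ is even, $\kappa_1=\kappa_{\alpha_p}$ ($p$ odd), $\kappa_2=\kappa_{\alpha_p}$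 ($p$ even); similarly $\kappa_3$ (and $\kappa_4$ when $m_2$ is even) for the $\beta_q$. $Q_a(j)$ ($a\in\{1,2\}$, $j\in\mathbb Z$) equals $m_a\kappa_{2a-1}$ if $m_a$ odd and $j\equiv0\pmod{2m_a}$; $\frac{m_a}{2}(\kappa_{2a}+\kappa_{2a-1})$ if $m_a$ even and $j\equiv0\pmod{2m_a}$; $\frac{m_a}2(\kappa_{2a}-\kappa_{2a-1})$ if $m_a$ even and $j\equiv m_a\pmod{2m_a}$; $0$ otherwise. Let $\mathcal C$ be the complex Clifford algebra generated by $e_1,\dots,e_4$ with $e_je_k+e_ke_j=2\delta_{jk}$, $\gamma:V\to\mathcal C$ linear with $\gamma(x_j)=e_j$, and $\tilde W\subset\mathcal C^\times$ the group generated by all $\gamma(\alpha)$, $\alpha\in R$; $z=-1\in\tilde W$. Put $\tilde s_p=\gamma(\alpha_p)$, $\tilde t_q=\gamma(\beta_q)$, $\tilde f_1=\tilde s_{m_1}$, $\tilde f_2=\tilde t_{m_2}$, $\tilde r_1=z\tilde s_{m_1}\tilde s_1$, $\tilde r_2=z\tilde t_{m_2}\tilde t_1$. Let $z_a^\pm=x_{2a-1}\pm ix_{2a}$, and for $x\in V$ let $O(x)=\sum_{\alpha\in R_+}\kappa_\alpha(x,\alpha)\gamma(\alpha)\in\mathbb C\tilde W$ (this is the image of the one-index symmetry of the Dunkl total angular momentum algebra), acting on $U$; write $O_a^\pm=O(z_a^\pm)$. *)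

theory Defs
  imports Complex_Main
begin

text \<open>Vectors of V = C^4 are represented as functions nat => complex; the standard
basis vector x_(j+1) corresponds to index j, j < 4 (entries outside 0..3 are 0).\<close>

type_synonym vec4 = "nat \<Rightarrow> complex"

definition bil :: "vec4 \<Rightarrow> vec4 \<Rightarrow> complex" where
  "bil x y = (\<Sum>j<4. x j * y j)"

text \<open>Roots: rt 1 m p = alpha_p (coordinates x1,x2), rt 2 m q = beta_q (coordinates x3,x4).\<close>
definition rt :: "nat \<Rightarrow> nat \<Rightarrow> nat \<Rightarrow> vec4" where
  "rt a m p = (\<lambda>j. if j = 2*a - 2 then complex_of_real (sin (real p * pi / real m))
                   else if j = 2*a - 1 then complex_of_real (- cos (real p * pi / real m))
                   else 0)"

definition roots :: "nat \<Rightarrow> nat \<Rightarrow> vec4 set" where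
  "roots m1 m2 = {rt 1 m1 p | p. p \<in> {1..2*m1}} \<union> {rt 2 m2 q | q. q \<in> {1..2*m2}}"

definition refl :: "vec4 \<Rightarrow> vec4 \<Rightarrow> vec4" where
  "refl b v = (\<lambda>j. v j - 2 * bil v b / bil b b * b j)"

definition W_invariant :: "nat \<Rightarrow> nat \<Rightarrow> (vec4 \<Rightarrow> real) \<Rightarrow> bool" where
  "W_invariant m1 m2 \<kappa> \<longleftrightarrow> (\<forall>\<alpha>\<in>roots m1 m2. \<forall>\<beta>\<in>roots m1 m2. \<kappa> (refl \<beta> \<alpha>) = \<kappa> \<alpha>)"

text \<open>z_a^eps = x_(2a-1) + eps i x_(2a).\<close>
definition zv :: "nat \<Rightarrow> int \<Rightarrow> vec4" where
  "zv a \<epsilon> = (\<lambda>j. if j = 2*a - 2 then 1 else if j = 2*a - 1 then of_int \<epsilon> * \<i> else 0)"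

text \<open>Elements are coefficient functions on blades e_A, A a subset of {0..3}
(coefficients outside Pow {0..<4} are irrelevant and always 0 for the elements used).\<close>
type_synonym cl = "nat set \<Rightarrow> complex"

definition blade_sign :: "nat set \<Rightarrow> nat set \<Rightarrow> complex" where
  "blade_sign A B = (-1) ^ card {(a, b). a \<in> A \<and> b \<in> B \<and> b < a}"

definition clmul :: "cl \<Rightarrow> cl \<Rightarrow> cl" where
  "clmul x y = (\<lambda>C. \<Sum>A\<in>Pow {0..<4}. \<Sum>B\<in>Pow {0..<4}.
      if (A - B) \<union> (B - A) = C then blade_sign A B * x A * y B else 0)"

definition clone :: cl where
  "clone = (\<lambda>A. if A = {} then 1 else 0)"

definition clneg :: "cl \<Rightarrow> cl" where
  "clneg x = (\<lambda>A. - x A)"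

definition gam :: "vec4 \<Rightarrow> cl" where
  "gam v = (\<lambda>A. if \<exists>j<4. A = {j} then v (THE j. A = {j}) else 0)"

text \<open>The group W~ generated by gam(alpha), alpha in R. Since gam(alpha)^2 = 1, the
generated submonoid coincides with the generated group.\<close>
inductive_set Wt :: "nat \<Rightarrow> nat \<Rightarrow> cl set" for m1 m2 where
  Wt_one: "clone \<in> Wt m1 m2"
| Wt_gen: "g \<in> Wt m1 m2 \<Longrightarrow> \<alpha> \<in> roots m1 m2 \<Longrightarrow> clmul (gam \<alpha>) g \<in> Wt m1 m2"

text \<open>tilde f_a = gam(rt a m_a m_a); tilde r_a = z * gam(rt a m_a m_a) * gam(rt a m_a 1).\<close>
definition ft :: "nat \<Rightarrow> nat \<Rightarrow> cl" where
  "ft a m = gam (rt a m m)"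

definition rtil :: "nat \<Rightarrow> nat \<Rightarrow> cl" where
  "rtil a m = clneg (clmul (gam (rt a m m)) (gam (rt a m 1)))"

definition is_rep :: "(complex \<Rightarrow> 'u::ab_group_add \<Rightarrow> 'u) \<Rightarrow> cl set \<Rightarrow> (cl \<Rightarrow> 'u \<Rightarrow> 'u) \<Rightarrow> bool" where
  "is_rep sc G \<rho> \<longleftrightarrow> vector_space sc
     \<and> (\<forall>g\<in>G. Vector_Spaces.linear sc sc (\<rho> g))
     \<and> \<rho> clone = id
     \<and> (\<forall>g\<in>G. \<forall>h\<in>G. \<rho> (clmul g h) = \<rho> g \<circ> \<rho> h)"

definition Oop :: "(complex \<Rightarrow> 'u::ab_group_add \<Rightarrow> 'u) \<Rightarrow> (cl \<Rightarrow> 'u \<Rightarrow> 'u) \<Rightarrow> (vec4 \<Rightarrow> real)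
      \<Rightarrow> nat \<Rightarrow> nat \<Rightarrow> vec4 \<Rightarrow> 'u \<Rightarrow> 'u" where
  "Oop sc \<rho> \<kappa> m1 m2 x u =
     (\<Sum>p=1..m1. sc (complex_of_real (\<kappa> (rt 1 m1 p)) * bil x (rt 1 m1 p)) (\<rho> (gam (rt 1 m1 p)) u))
   + (\<Sum>q=1..m2. sc (complex_of_real (\<kappa> (rt 2 m2 q)) * bil x (rt 2 m2 q)) (\<rho> (gam (rt 2 m2 q)) u))"

text \<open>Q_a(j): k1 = kappa_(2a-1) (value on odd-indexed roots, = common value if m odd),
k2 = kappa_(2a) (value on even-indexed roots).\<close>
definition Qf :: "nat \<Rightarrow> real \<Rightarrow> real \<Rightarrow> int \<Rightarrow> real" where
  "Qf m k1 k2 j =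
     (if odd m then (if j mod (2 * int m) = 0 then real m * k1 else 0)
      else if j mod (2 * int m) = 0 then real m / 2 * (k2 + k1)
      else if j mod (2 * int m) = int m then real m / 2 * (k2 - k1)
      else 0)"

definition Qa :: "(vec4 \<Rightarrow> real) \<Rightarrow> nat \<Rightarrow> nat \<Rightarrow> int \<Rightarrow> real" where
  "Qa \<kappa> a m j = Qf m (\<kappa> (rt a m 1)) (\<kappa> (rt a m 2)) j"

end

theory Submission
  imports Defs
begin

text \<open>The roots of the a-th dihedral factor lie in one coordinate plane, where
gam(alpha_p) gam(alpha_q) is the rotor cos((q - p) pi/m) + sin((q - p) pi/m) e_i e_j. Thus r~_a
is the rotor by pi/m and gam(alpha_(p+1)) = gam(alpha_p) r~_a, so on the eigenvector u we get
gam(alpha_p) u = zeta^(l p) g with g = gam(alpha_0) u and, since gam(alpha_p)^2 = 1, also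
gam(alpha_p) g = zeta^(-l p) u. Two reflections shift the index of a root by any even number,
so kappa(alpha_p) depends only on the parity of p. As (z_a^eps, alpha_p) = -i eps zeta^(eps p),
O_a^eps u and O_a^eps g are -i eps times the character sums
sum_p kappa(alpha_p) zeta^((eps +- l) p) = Q_a(eps +- l), and f~_a u = zeta^(l m) g = -g.\<close>

section \<open>Clifford algebra of a coordinate plane\<close>

lemma blade_sign_eq_sum:
  assumes "finite A" "finite B"
  shows "blade_sign A B = (-1) ^ (\<Sum>a\<in>A. \<Sum>b\<in>B. if b < a then 1 else 0)"
proof -
  have "{(a, b). a \<in> A \<and> b \<in> B \<and> b < a} = (SIGMA a:A. {b \<in> B. b < a})" by auto
  moreover have "card {b \<in> B. b < a} = (\<Sum>b\<in>B. if b < a then 1 else 0)" for a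
    using assms(2) by (simp add: sum.inter_filter[symmetric])
  ultimately show ?thesis
    using assms by (simp add: blade_sign_def)
qed

definition plane_supported :: "nat \<Rightarrow> nat \<Rightarrow> cl \<Rightarrow> bool" where
  "plane_supported i j x \<longleftrightarrow> (\<forall>C. C \<notin> {{}, {i}, {j}, {i, j}} \<longrightarrow> x C = 0)"

lemma clmul_plane:
  assumes ij: "i < j" "j < 4" and x: "plane_supported i j x" and y: "plane_supported i j y"
  shows "clmul x y C =
    (if C = {} then x {} * y {} + x {i} * y {i} + x {j} * y {j} - x {i,j} * y {i,j}
     else if C = {i} then x {} * y {i} + x {i} * y {} - x {j} * y {i,j} + x {i,j} * y {j}
     else if C = {j} then x {} * y {j} + x {j} * y {} + x {i} * y {i,j} - x {i,j} * y {i}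
     else if C = {i,j} then x {} * y {i,j} + x {i,j} * y {} + x {i} * y {j} - x {j} * y {i}
     else 0)"
proof -
  define P :: "nat set set" where "P = {{}, {i}, {j}, {i, j}}"
  define t where "t A B = (if (A - B) \<union> (B - A) = C then blade_sign A B * x A * y B else 0)" for A B
  have sub: "P \<subseteq> Pow {0..<4}" using ij by (auto simp: P_def)
  have x0: "x A = 0" and y0: "y A = 0" if "A \<notin> P" for A
    using x y that by (simp_all add: plane_supported_def P_def)
  have "clmul x y C = (\<Sum>A\<in>P. \<Sum>B\<in>Pow {0..<4}. t A B)"
    unfolding clmul_def t_def
    by (rule sum.mono_neutral_right[OF _ sub]) (auto simp: x0 intro!: sum.neutral)
  also have "\<dots> = (\<Sum>A\<in>P. \<Sum>B\<in>P. t A B)"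
    unfolding t_def by (intro sum.cong refl sum.mono_neutral_right[OF _ sub]) (simp_all add: y0)
  finally show ?thesis
    using ij
    by (simp add: P_def t_def blade_sign_eq_sum insert_Diff_if doubleton_eq_iff insert_commute)
qed

definition plane_vec :: "nat \<Rightarrow> nat \<Rightarrow> real \<Rightarrow> vec4" where
  "plane_vec i j \<theta> =
     (\<lambda>k. if k = i then of_real (sin \<theta>) else if k = j then of_real (- cos \<theta>) else 0)"

definition plane_rot :: "nat \<Rightarrow> nat \<Rightarrow> real \<Rightarrow> cl" where
  "plane_rot i j \<phi> =
     (\<lambda>C. if C = {} then of_real (cos \<phi>) else if C = {i, j} then of_real (sin \<phi>) else 0)"

lemma gam_plane_vec:
  assumes "i < j" "j < 4"
  shows "gam (plane_vec i j \<theta>) =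
    (\<lambda>C. if C = {i} then of_real (sin \<theta>) else if C = {j} then of_real (- cos \<theta>) else 0)"
  using assms by (intro ext) (auto simp: gam_def plane_vec_def)

lemma plane_supported_gam_plane_vec:
  "i < j \<Longrightarrow> j < 4 \<Longrightarrow> plane_supported i j (gam (plane_vec i j \<theta>))"
  by (simp add: gam_plane_vec plane_supported_def)

lemma plane_supported_plane_rot: "plane_supported i j (plane_rot i j \<phi>)"
  by (simp add: plane_rot_def plane_supported_def)

lemma clmul_gam_plane_vec:
  assumes "i < j" "j < 4"
  shows "clmul (gam (plane_vec i j \<theta>)) (gam (plane_vec i j \<psi>)) = plane_rot i j (\<psi> - \<theta>)"
proof
  fix C
  show "clmul (gam (plane_vec i j \<theta>)) (gam (plane_vec i j \<psi>)) C = plane_rot i j (\<psi> - \<theta>) C"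
    unfolding clmul_plane[OF assms plane_supported_gam_plane_vec[OF assms]
        plane_supported_gam_plane_vec[OF assms]]
    using assms
    by (auto simp: gam_plane_vec plane_rot_def sin_diff cos_diff
        simp flip: of_real_mult of_real_add of_real_diff)
qed

lemma clmul_gam_plane_vec_plane_rot:
  assumes "i < j" "j < 4"
  shows "clmul (gam (plane_vec i j \<theta>)) (plane_rot i j \<phi>) = gam (plane_vec i j (\<theta> + \<phi>))"
proof
  fix C
  show "clmul (gam (plane_vec i j \<theta>)) (plane_rot i j \<phi>) C = gam (plane_vec i j (\<theta> + \<phi>)) C"
    unfolding clmul_plane[OF assms plane_supported_gam_plane_vec[OF assms]
        plane_supported_plane_rot]
    using assms
    by (auto simp: gam_plane_vec plane_rot_def sin_add cos_add
        simp flip: of_real_mult of_real_add of_real_diff)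
qed

lemma plane_rot_zero: "plane_rot i j 0 = clone"
  by (auto simp: plane_rot_def clone_def)

lemma clneg_plane_rot: "clneg (plane_rot i j \<phi>) = plane_rot i j (\<phi> + pi)"
  by (auto simp: clneg_def plane_rot_def)

section \<open>Roots of one dihedral factor\<close>

lemma bil_eq_two_coords:
  assumes "i < 4" "j < 4" "i \<noteq> j" "\<And>k. k \<noteq> i \<Longrightarrow> k \<noteq> j \<Longrightarrow> u k = 0"
  shows "bil u v = u i * v i + u j * v j"
proof -
  have "bil u v = (\<Sum>k\<in>{i,j}. u k * v k)"
    unfolding bil_def by (rule sum.mono_neutral_right) (use assms in auto)
  then show ?thesis using assms by simp
qed

lemma bil_plane_vec:
  "i < j \<Longrightarrow> j < 4 \<Longrightarrow> bil (plane_vec i j \<theta>) (plane_vec i j \<psi>) = of_real (cos (\<theta> - \<psi>))"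
  by (subst bil_eq_two_coords[of i j])
    (auto simp: plane_vec_def cos_diff simp flip: of_real_mult of_real_add)

lemma refl_plane_vec:
  assumes "i < j" "j < 4"
  shows "refl (plane_vec i j \<phi>) (plane_vec i j \<theta>) = plane_vec i j (2 * \<phi> - \<theta> + pi)"
proof -
  have pyth: "(cos \<phi>)\<^sup>2 + (sin \<phi>)\<^sup>2 = 1" by simp
  have "sin \<theta> - 2 * cos (\<theta> - \<phi>) * sin \<phi> = sin (2 * \<phi> - \<theta> + pi)"
    "- cos \<theta> - 2 * cos (\<theta> - \<phi>) * - cos \<phi> = - cos (2 * \<phi> - \<theta> + pi)"
    unfolding sin_add cos_add sin_diff cos_diff sin_double cos_double sin_pi cos_pi using pyth
    by algebra+
  then have "complex_of_real (sin \<theta> - 2 * cos (\<theta> - \<phi>) * sin \<phi>) = of_real (sin (2 * \<phi> - \<theta> + pi))"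
    "complex_of_real (- cos \<theta> - 2 * cos (\<theta> - \<phi>) * - cos \<phi>) = of_real (- cos (2 * \<phi> - \<theta> + pi))"
    by simp_all
  then show ?thesis
    unfolding refl_def bil_plane_vec[OF assms] using assms
    by (intro ext) (simp add: plane_vec_def)
qed

lemma plane_vec_add_2pi_multiple: "plane_vec i j (\<theta> + 2 * pi * of_int k) = plane_vec i j \<theta>"
proof -
  have "sin (\<theta> + 2 * pi * of_int k) = sin \<theta>" "cos (\<theta> + 2 * pi * of_int k) = cos \<theta>"
    by (simp_all only: sin_add cos_add sin_int_2pin cos_int_2pin)
  then show ?thesis unfolding plane_vec_def by (simp only:)
qed

definition plane_root :: "nat \<Rightarrow> nat \<Rightarrow> nat \<Rightarrow> int \<Rightarrow> vec4" where
  "plane_root i j m n = plane_vec i j (of_int n * pi / real m)"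

lemma rt_eq_plane_vec: "rt a m p = plane_vec (2 * a - 2) (2 * a - 1) (real p * pi / real m)"
  by (intro ext) (simp add: rt_def plane_vec_def)

lemma rt_eq_plane_root: "rt a m p = plane_root (2 * a - 2) (2 * a - 1) m (int p)"
  by (simp add: rt_eq_plane_vec plane_root_def)

lemma plane_root_mod:
  assumes "0 < m"
  shows "plane_root i j m (n mod (2 * int m)) = plane_root i j m n"
proof -
  have "real_of_int n = of_int (n mod (2 * int m) + 2 * int m * (n div (2 * int m)))"
    by simp
  then have "real_of_int n = of_int (n mod (2 * int m)) + 2 * real m * of_int (n div (2 * int m))"
    by (simp only: of_int_add of_int_mult of_int_of_nat_eq of_int_numeral)
  then have "of_int n * pi / real m
      = of_int (n mod (2 * int m)) * pi / real m + 2 * pi * of_int (n div (2 * int m))"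
    using assms by (simp add: field_simps)
  then show ?thesis
    unfolding plane_root_def by (simp only: plane_vec_add_2pi_multiple)
qed

lemma plane_root_mem_from_period:
  assumes "0 < m" and R: "\<And>p. p \<in> {1..2 * m} \<Longrightarrow> plane_root i j m (int p) \<in> R"
  shows "plane_root i j m n \<in> R"
proof (cases "n mod (2 * int m) = 0")
  case True
  then have "plane_root i j m n = plane_root i j m (int (2 * m))"
    using plane_root_mod[OF assms(1), of i j n] plane_root_mod[OF assms(1), of i j "int (2 * m)"]
    by simp
  then show ?thesis using R[of "2 * m"] assms(1) by simp
next
  case False
  moreover have "0 \<le> n mod (2 * int m)" "n mod (2 * int m) < 2 * int m" using assms(1) by simp_all
  ultimately have "nat (n mod (2 * int m)) \<in> {1..2 * m}"
    and "int (nat (n mod (2 * int m))) = n mod (2 * int m)" by auto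
  then show ?thesis
    using R[of "nat (n mod (2 * int m))"] plane_root_mod[OF assms(1), of i j n] by simp
qed

lemma refl_plane_root:
  assumes "i < j" "j < 4" "0 < m"
  shows "refl (plane_root i j m k) (plane_root i j m n) = plane_root i j m (2 * k - n + int m)"
  using assms unfolding plane_root_def refl_plane_vec[OF assms(1,2)]
  by (intro arg_cong[where f="plane_vec i j"]) (simp add: field_simps)

lemma refl_invariant_plane_root_parity:
  assumes ij: "i < j" "j < 4" and m: "0 < m"
    and R: "\<And>n. plane_root i j m n \<in> R"
    and inv: "\<forall>\<alpha>\<in>R. \<forall>\<beta>\<in>R. \<kappa> (refl \<beta> \<alpha>) = \<kappa> \<alpha>"
  shows "\<kappa> (plane_root i j m n) = \<kappa> (plane_root i j m (if odd n then 1 else 2))"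
    and "odd m \<Longrightarrow> \<kappa> (plane_root i j m 2) = \<kappa> (plane_root i j m 1)"
proof -
  let ?r = "plane_root i j m"
  have reflect: "\<kappa> (?r (2 * k - n + int m)) = \<kappa> (?r n)" for k n
  proof -
    have "\<kappa> (refl (?r k) (?r n)) = \<kappa> (?r n)" using inv R by blast
    then show ?thesis by (simp only: refl_plane_root[OF ij m])
  qed
  have shift: "\<kappa> (?r (c + 2 * t)) = \<kappa> (?r c)" for c t
    using reflect[of t "- c + int m"] reflect[of 0 c] by (simp add: add.commute)
  define c :: int where "c = (if odd n then 1 else 2)"
  have "even (n - c)" by (simp add: c_def)
  then have "n = c + 2 * ((n - c) div 2)" by simp
  then show "\<kappa> (?r n) = \<kappa> (?r (if odd n then 1 else 2))"
    using shift[of c] unfolding c_def by metis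
  assume "odd m"
  then have "even (int m - 3)" by simp
  then have "2 * 0 - 1 + int m = 2 + 2 * ((int m - 3) div 2)" by simp
  then show "\<kappa> (?r 2) = \<kappa> (?r 1)"
    using reflect[of 0 1] shift[of 2] by metis
qed

section \<open>Character sums\<close>

lemma cis_int_pi_div_eq_1_iff:
  assumes "0 < m"
  shows "cis (of_int j * pi / real m) = 1 \<longleftrightarrow> j mod (2 * int m) = 0"
proof
  assume "cis (of_int j * pi / real m) = 1"
  then have "cos (of_int j * pi / real m) = 1" by (metis cis.sel(1) one_complex.sel(1))
  then obtain n :: int where "of_int j * pi / real m = of_int n * 2 * pi"
    by (auto simp: cos_one_2pi_int)
  then have "real_of_int j = real_of_int (n * 2 * int m)" using assms by (simp add: field_simps)
  then show "j mod (2 * int m) = 0" by (simp only: of_int_eq_iff) simp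
next
  assume "j mod (2 * int m) = 0"
  then obtain t where "j = 2 * int m * t" by auto
  then have "of_int j * pi / real m = 2 * pi * of_int t" using assms by simp
  then show "cis (of_int j * pi / real m) = 1" by simp
qed

lemma cis_int_pi_div_eq_minus_1_iff:
  assumes "0 < m"
  shows "cis (of_int j * pi / real m) = -1 \<longleftrightarrow> j mod (2 * int m) = int m"
proof -
  have "cis (of_int j * pi / real m) = - cis (of_int (j - int m) * pi / real m)"
    using assms by (simp add: diff_divide_distrib left_diff_distrib flip: cis_divide)
  moreover have "(j - int m) mod (2 * int m) = 0 \<longleftrightarrow> j mod (2 * int m) = int m mod (2 * int m)"
    using mod_eq_dvd_iff[of j "2 * int m" "int m"] by (simp add: dvd_eq_mod_eq_0)
  moreover have "int m mod (2 * int m) = int m" using assms by simp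
  ultimately show ?thesis
    using cis_int_pi_div_eq_1_iff[OF assms, of "j - int m"] by (auto simp: minus_equation_iff)
qed

lemma sum_powers_root_of_unity:
  fixes \<omega> :: "'a :: field"
  assumes "\<omega> ^ n = 1"
  shows "(\<Sum>q<n. \<omega> ^ q) = (if \<omega> = 1 then of_nat n else 0)"
  using assms geometric_sum[of \<omega> n] by auto

lemma sum_atLeast1_double_pairs: "(\<Sum>p=1..2 * (n::nat). f p) = (\<Sum>q<n. f (2 * q + 1) + f (2 * q + 2))"
proof (induction n)
  case (Suc n)
  have "{1..2 * Suc n} = insert (2 * n + 2) (insert (2 * n + 1) {1..2 * n})" by auto
  then show ?case using Suc by (simp add: ac_simps)
qed simp

lemma Qf_uminus: "Qf m k1 k2 (- j) = Qf m k1 k2 j"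
proof (cases "m = 0")
  case False
  then have "j mod (2 * int m) < 2 * int m" by simp
  then have "(- j) mod (2 * int m) = 0 \<longleftrightarrow> j mod (2 * int m) = 0"
    "(- j) mod (2 * int m) = int m \<longleftrightarrow> j mod (2 * int m) = int m"
    by (auto simp: zmod_zminus1_eq_if)
  then show ?thesis unfolding Qf_def by simp
qed (simp add: Qf_def)

lemma sum_parity_weights_cis_eq_Qf:
  fixes k1 k2 :: real and j :: int
  assumes m: "0 < m" and j: "even j" and k: "odd m \<Longrightarrow> k2 = k1"
  shows "(\<Sum>p=1..m. of_real (if odd p then k1 else k2) * cis (real p * (of_int j * pi / real m)))
       = of_real (Qf m k1 k2 j)"
proof -
  define \<omega> where "\<omega> = cis (of_int j * pi / real m)"
  have pow: "cis (real p * (of_int j * pi / real m)) = \<omega> ^ p" for p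
    by (simp add: \<omega>_def DeMoivre)
  have \<omega>1: "\<omega> = 1 \<longleftrightarrow> j mod (2 * int m) = 0"
    and \<omega>m1: "\<omega> = -1 \<longleftrightarrow> j mod (2 * int m) = int m"
    unfolding \<omega>_def using cis_int_pi_div_eq_1_iff[OF m] cis_int_pi_div_eq_minus_1_iff[OF m] by auto
  obtain t where "j = 2 * t" using j by blast
  then have "real m * (of_int j * pi / real m) = 2 * pi * of_int t" using m by simp
  then have root: "\<omega> ^ m = 1" by (simp flip: pow)
  show ?thesis
    unfolding pow
  proof (cases "odd m")
    case True
    have "(if odd p then k1 else k2) = k1" for p :: nat using k[OF True] by simp
    then have "(\<Sum>p=1..m. of_real (if odd p then k1 else k2) * \<omega> ^ p)
        = of_real k1 * (\<omega> * (\<Sum>p<m. \<omega> ^ p))"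
      by (simp add: sum.atLeast1_atMost_eq sum_distrib_left)
    then show "(\<Sum>p=1..m. of_real (if odd p then k1 else k2) * \<omega> ^ p) = of_real (Qf m k1 k2 j)"
      using True \<omega>1 by (cases "\<omega> = 1") (simp_all add: sum_powers_root_of_unity[OF root] Qf_def)
  next
    case False
    then obtain n where n: "m = 2 * n" by blast
    have "(\<Sum>p=1..m. of_real (if odd p then k1 else k2) * \<omega> ^ p)
        = (of_real k1 * \<omega> + of_real k2 * \<omega>\<^sup>2) * (\<Sum>q<n. (\<omega>\<^sup>2) ^ q)"
      unfolding n sum_atLeast1_double_pairs sum_distrib_left
      by (simp add: algebra_simps power_add power_mult power_mult_distrib power2_eq_square)
    moreover have "(\<omega>\<^sup>2) ^ n = 1" using root n by (simp flip: power_mult)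
    moreover have "real m / 2 = real n" using n by simp
    ultimately show "(\<Sum>p=1..m. of_real (if odd p then k1 else k2) * \<omega> ^ p) = of_real (Qf m k1 k2 j)"
      using False \<omega>1 \<omega>m1 m
      by (cases "\<omega> = 1"; cases "\<omega> = -1")
        (simp_all add: sum_powers_root_of_unity power2_eq_1_iff Qf_def algebra_simps)
  qed
qed

section \<open>The operator O on one dihedral factor\<close>

lemma bil_zv_plane_vec:
  assumes a: "a \<in> {1, 2}" and e: "\<epsilon> \<in> {1, -1}"
  shows "bil (zv a \<epsilon>) (plane_vec (2 * a - 2) (2 * a - 1) \<theta>) = - (of_int \<epsilon> * \<i>) * cis (of_int \<epsilon> * \<theta>)"
proof -
  have "bil (zv a \<epsilon>) (plane_vec (2 * a - 2) (2 * a - 1) \<theta>)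
      = of_real (sin \<theta>) + of_int \<epsilon> * \<i> * of_real (- cos \<theta>)"
    by (subst bil_eq_two_coords[of "2 * a - 2" "2 * a - 1"])
      (use a in \<open>auto simp: zv_def plane_vec_def\<close>)
  then show ?thesis using e by (auto simp: complex_eq_iff)
qed

lemma bil_zv_rt_other:
  assumes "a \<in> {1, 2}" "b \<in> {1, 2}" "a \<noteq> b"
  shows "bil (zv a \<epsilon>) (rt b m p) = 0"
  by (subst bil_eq_two_coords[of "2 * a - 2" "2 * a - 1"])
    (use assms in \<open>auto simp: zv_def rt_def\<close>)

definition block_op :: "(complex \<Rightarrow> 'u::ab_group_add \<Rightarrow> 'u) \<Rightarrow> (cl \<Rightarrow> 'u \<Rightarrow> 'u) \<Rightarrow> (vec4 \<Rightarrow> real)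
      \<Rightarrow> nat \<Rightarrow> nat \<Rightarrow> vec4 \<Rightarrow> 'u \<Rightarrow> 'u" where
  "block_op sc \<rho> \<kappa> a m x u =
     (\<Sum>p=1..m. sc (of_real (\<kappa> (rt a m p)) * bil x (rt a m p)) (\<rho> (gam (rt a m p)) u))"

lemma Oop_eq_block_op: "Oop sc \<rho> \<kappa> m1 m2 x u = block_op sc \<rho> \<kappa> 1 m1 x u + block_op sc \<rho> \<kappa> 2 m2 x u"
  unfolding Oop_def block_op_def ..

lemma block_op_zv_other:
  assumes "vector_space sc" "a \<in> {1, 2}" "b \<in> {1, 2}" "a \<noteq> b"
  shows "block_op sc \<rho> \<kappa> b m (zv a \<epsilon>) u = 0"
proof -
  interpret vector_space sc by fact
  show ?thesis using assms(2-) by (simp add: block_op_def bil_zv_rt_other)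
qed

lemma is_rep_scale: "is_rep sc G \<rho> \<Longrightarrow> g \<in> G \<Longrightarrow> \<rho> g (sc c v) = sc c (\<rho> g v)"
  by (simp add: is_rep_def Vector_Spaces.linear_iff)

lemma block_op_scale:
  assumes rep: "is_rep sc G \<rho>" and G: "\<And>p. p \<in> {1..m} \<Longrightarrow> gam (rt a m p) \<in> G"
  shows "block_op sc \<rho> \<kappa> a m x (sc c u) = sc c (block_op sc \<rho> \<kappa> a m x u)"
proof -
  interpret vector_space sc using rep by (simp add: is_rep_def)
  show ?thesis
    unfolding block_op_def scale_sum_right
    by (intro sum.cong refl) (simp add: is_rep_scale[OF rep G] mult.commute)
qed

lemma is_rep_gam_plane_vec_involution:
  assumes rep: "is_rep sc G \<rho>" and ij: "i < j" "j < 4" and G: "gam (plane_vec i j \<theta>) \<in> G"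
  shows "\<rho> (gam (plane_vec i j \<theta>)) (\<rho> (gam (plane_vec i j \<theta>)) v) = v"
proof -
  have "clmul (gam (plane_vec i j \<theta>)) (gam (plane_vec i j \<theta>)) = clone"
    by (simp add: clmul_gam_plane_vec[OF ij] plane_rot_zero)
  then show ?thesis using rep G unfolding is_rep_def by (metis comp_apply id_apply)
qed

lemma is_rep_plane_root_shift:
  assumes rep: "is_rep sc G \<rho>" and ij: "i < j" "j < 4"
    and G: "\<And>n. gam (plane_root i j m n) \<in> G" and rot: "plane_rot i j (pi / real m) \<in> G"
    and eig: "\<rho> (plane_rot i j (pi / real m)) u = sc (cis \<phi>) u"
  shows "\<rho> (gam (plane_root i j m (int p))) u
           = sc (cis (real p * \<phi>)) (\<rho> (gam (plane_root i j m 0)) u)"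
proof (induction p)
  case 0
  interpret vector_space sc using rep by (simp add: is_rep_def)
  show ?case by simp
next
  case (Suc p)
  interpret vector_space sc using rep by (simp add: is_rep_def)
  have "gam (plane_root i j m (int (Suc p)))
      = clmul (gam (plane_root i j m (int p))) (plane_rot i j (pi / real m))"
    unfolding plane_root_def clmul_gam_plane_vec_plane_rot[OF ij]
    by (simp add: add_divide_distrib distrib_right add.commute)
  then have "\<rho> (gam (plane_root i j m (int (Suc p)))) u
      = \<rho> (gam (plane_root i j m (int p))) (\<rho> (plane_rot i j (pi / real m)) u)"
    using rep G rot unfolding is_rep_def by simp
  also have "\<dots> = sc (cis \<phi> * cis (real p * \<phi>)) (\<rho> (gam (plane_root i j m 0)) u)"
    by (simp add: eig is_rep_scale[OF rep G] Suc)
  also have "cis \<phi> * cis (real p * \<phi>) = cis (real (Suc p) * \<phi>)"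
    by (simp add: cis_mult distrib_right)
  finally show ?case .
qed

lemma block_op_zv_eq_Qa:
  fixes k :: int
  assumes a: "a \<in> {1, 2}" and m: "0 < m" and e: "\<epsilon> \<in> {1, -1}" and V: "vector_space sc"
    and R: "\<And>n. plane_root (2 * a - 2) (2 * a - 1) m n \<in> R"
    and inv: "\<forall>\<alpha>\<in>R. \<forall>\<beta>\<in>R. \<kappa> (refl \<beta> \<alpha>) = \<kappa> \<alpha>"
    and k: "odd k"
    and shift: "\<And>p. p \<in> {1..m} \<Longrightarrow>
      \<rho> (gam (rt a m p)) w = sc (cis (real p * (of_int k * pi / real m))) w'"
  shows "block_op sc \<rho> \<kappa> a m (zv a \<epsilon>) w = sc (- (of_int \<epsilon> * \<i>) * of_real (Qa \<kappa> a m (k + \<epsilon>))) w'"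
proof -
  interpret vector_space sc by (rule V)
  have ij: "2 * a - 2 < 2 * a - 1" "2 * a - 1 < 4" using a by auto
  note parity = refl_invariant_plane_root_parity[OF ij m R inv]
  define c where "c p = of_real (if odd p then \<kappa> (rt a m 1) else \<kappa> (rt a m 2))
      * cis (real p * (of_int (k + \<epsilon>) * pi / real m))" for p
  have "block_op sc \<rho> \<kappa> a m (zv a \<epsilon>) w = (\<Sum>p=1..m. sc (- (of_int \<epsilon> * \<i>) * c p) w')"
    unfolding block_op_def
  proof (intro sum.cong refl)
    fix p assume p: "p \<in> {1..m}"
    have \<kappa>: "\<kappa> (rt a m p) = (if odd p then \<kappa> (rt a m 1) else \<kappa> (rt a m 2))"
      using parity(1)[of "int p"] by (simp add: rt_eq_plane_root)
    have bil: "bil (zv a \<epsilon>) (rt a m p) = - (of_int \<epsilon> * \<i>) * cis (of_int \<epsilon> * (real p * pi / real m))"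
      unfolding rt_eq_plane_vec by (rule bil_zv_plane_vec[OF a e])
    have angle: "cis (of_int \<epsilon> * (real p * pi / real m)) * cis (real p * (of_int k * pi / real m))
        = cis (real p * (of_int (k + \<epsilon>) * pi / real m))"
      by (simp add: cis_mult algebra_simps add_divide_distrib)
    have "sc (of_real (\<kappa> (rt a m p)) * bil (zv a \<epsilon>) (rt a m p)) (\<rho> (gam (rt a m p)) w)
        = sc (- (of_int \<epsilon> * \<i>) * (of_real (if odd p then \<kappa> (rt a m 1) else \<kappa> (rt a m 2))
            * (cis (of_int \<epsilon> * (real p * pi / real m))
               * cis (real p * (of_int k * pi / real m))))) w'"
      unfolding shift[OF p] scale_scale \<kappa> bil by (simp only: mult_ac)
    then show "sc (of_real (\<kappa> (rt a m p)) * bil (zv a \<epsilon>) (rt a m p)) (\<rho> (gam (rt a m p)) w)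
        = sc (- (of_int \<epsilon> * \<i>) * c p) w'"
      unfolding angle c_def .
  qed
  also have "\<dots> = sc (- (of_int \<epsilon> * \<i>) * (\<Sum>p=1..m. c p)) w'"
    by (simp add: scale_sum_left sum_distrib_left)
  also have "(\<Sum>p=1..m. c p) = of_real (Qa \<kappa> a m (k + \<epsilon>))"
    unfolding c_def Qa_def
    by (rule sum_parity_weights_cis_eq_Qf[OF m])
      (use k e parity(2) in \<open>auto simp: rt_eq_plane_root\<close>)
  finally show ?thesis .
qed

lemma rtil_eq_plane_rot:
  assumes "a \<in> {1, 2}" "0 < m"
  shows "rtil a m = plane_rot (2 * a - 2) (2 * a - 1) (pi / real m)"
proof -
  have "1 * pi / real m - real m * pi / real m + pi = pi / real m" using assms(2) by simp
  then show ?thesis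
    using assms(1)
    by (auto simp: rtil_def rt_eq_plane_vec clmul_gam_plane_vec clneg_plane_rot simp del: of_nat_1)
qed

lemma gam_plane_root_mem:
  assumes ij: "i < j" "j < 4" and G1: "clone \<in> G"
    and G2: "\<And>g \<alpha>. g \<in> G \<Longrightarrow> \<alpha> \<in> R \<Longrightarrow> clmul (gam \<alpha>) g \<in> G"
    and R: "\<And>n. plane_root i j m n \<in> R"
  shows "gam (plane_root i j m n) \<in> G" and "plane_rot i j (pi / real m) \<in> G"
proof -
  have gam: "gam (plane_root i j m k) \<in> G" for k
  proof -
    have "clmul (gam (plane_root i j m k)) clone = gam (plane_root i j m k)"
      using clmul_gam_plane_vec_plane_rot[OF ij, of _ 0]
      unfolding plane_root_def plane_rot_zero by simp
    then show ?thesis using G2[OF G1 R] by metis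
  qed
  then show "gam (plane_root i j m n) \<in> G" .
  have "clmul (gam (plane_root i j m 0)) (gam (plane_root i j m 1))
      = plane_rot i j (pi / real m)"
    by (simp add: plane_root_def clmul_gam_plane_vec[OF ij])
  then show "plane_rot i j (pi / real m) \<in> G" using G2[OF gam R] by metis
qed

lemma rt_action_on_rtil_eigenvector:
  fixes sc :: "complex \<Rightarrow> 'u::ab_group_add \<Rightarrow> 'u" and l :: nat
  assumes a: "a \<in> {1, 2}" and m: "0 < m"
    and rep: "is_rep sc G \<rho>" and G1: "clone \<in> G"
    and G2: "\<And>g \<alpha>. g \<in> G \<Longrightarrow> \<alpha> \<in> R \<Longrightarrow> clmul (gam \<alpha>) g \<in> G"
    and R: "\<And>n. plane_root (2 * a - 2) (2 * a - 1) m n \<in> R"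
    and eig: "\<rho> (rtil a m) u = sc (exp (\<i> * pi / of_nat m) ^ l) u"
  defines "g \<equiv> \<rho> (gam (plane_root (2 * a - 2) (2 * a - 1) m 0)) u"
  shows "\<rho> (gam (rt a m p)) u = sc (cis (real p * (of_int (int l) * pi / real m))) g"
    and "\<rho> (gam (rt a m p)) g = sc (cis (real p * (of_int (- int l) * pi / real m))) u"
proof -
  interpret vector_space sc using rep by (simp add: is_rep_def)
  define i j where "i = 2 * a - 2" and "j = 2 * a - 1"
  have ij: "i < j" "j < 4" using a by (auto simp: i_def j_def)
  have rt: "rt a m p = plane_root i j m (int p)" for p
    by (simp add: rt_eq_plane_root i_def j_def)
  have gamG: "gam (plane_root i j m n) \<in> G" for n
    by (rule gam_plane_root_mem(1)[OF ij G1 G2 R[folded i_def j_def]])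
  have rotG: "plane_rot i j (pi / real m) \<in> G"
    by (rule gam_plane_root_mem(2)[OF ij G1 G2 R[folded i_def j_def]])
  have "exp (\<i> * pi / of_nat m) = cis (pi / real m)" by (simp add: cis_conv_exp)
  then have "exp (\<i> * pi / of_nat m) ^ l = cis (real_of_int (int l) * pi / real m)"
    by (simp add: DeMoivre)
  then have rot: "\<rho> (plane_rot i j (pi / real m)) u = sc (cis (of_int (int l) * pi / real m)) u"
    using eig rtil_eq_plane_rot[OF a m] by (simp add: i_def j_def)
  show u_shift: "\<rho> (gam (rt a m p)) u = sc (cis (real p * (of_int (int l) * pi / real m))) g" for p
    using is_rep_plane_root_shift[OF rep ij gamG rotG rot]
    by (simp add: g_def rt_eq_plane_root i_def j_def)
  have "u = \<rho> (gam (rt a m p)) (\<rho> (gam (rt a m p)) u)"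
    using is_rep_gam_plane_vec_involution[OF rep ij gamG[of "int p", unfolded plane_root_def]]
    unfolding rt plane_root_def by simp
  also have "\<dots> = sc (cis (real p * (of_int (int l) * pi / real m))) (\<rho> (gam (rt a m p)) g)"
    using u_shift is_rep_scale[OF rep] gamG by (simp add: rt)
  finally show "\<rho> (gam (rt a m p)) g = sc (cis (real p * (of_int (- int l) * pi / real m))) u"
    by (simp add: cis_mult flip: cis_divide)
qed

lemma block_op_zv_rtil_eigenvector:
  fixes \<kappa> :: "vec4 \<Rightarrow> real" and sc :: "complex \<Rightarrow> 'u::ab_group_add \<Rightarrow> 'u" and l :: nat
  assumes a: "a \<in> {1, 2}" and m: "0 < m" and l: "odd l"
    and rep: "is_rep sc G \<rho>" and G1: "clone \<in> G"
    and G2: "\<And>g \<alpha>. g \<in> G \<Longrightarrow> \<alpha> \<in> R \<Longrightarrow> clmul (gam \<alpha>) g \<in> G"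
    and R: "\<And>p. p \<in> {1..2 * m} \<Longrightarrow> rt a m p \<in> R"
    and inv: "\<forall>\<alpha>\<in>R. \<forall>\<beta>\<in>R. \<kappa> (refl \<beta> \<alpha>) = \<kappa> \<alpha>"
    and eig: "\<rho> (rtil a m) u = sc (exp (\<i> * pi / of_nat m) ^ l) u"
    and e: "\<epsilon> \<in> {1, -1}"
  shows "block_op sc \<rho> \<kappa> a m (zv a \<epsilon>) u
           = sc (of_int \<epsilon> * \<i> * of_real (Qa \<kappa> a m (int l + \<epsilon>))) (\<rho> (ft a m) u)"
    and "block_op sc \<rho> \<kappa> a m (zv a \<epsilon>) (block_op sc \<rho> \<kappa> a m (zv a (- \<epsilon>)) u)
           = sc (of_real ((Qa \<kappa> a m (int l - \<epsilon>))\<^sup>2)) u"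
proof -
  interpret vector_space sc using rep by (simp add: is_rep_def)
  let ?Q = "\<lambda>k. complex_of_real (Qa \<kappa> a m k)"
  have RR: "plane_root (2 * a - 2) (2 * a - 1) m n \<in> R" for n
    using plane_root_mem_from_period[OF m] R by (simp add: rt_eq_plane_root)
  define g where "g = \<rho> (gam (plane_root (2 * a - 2) (2 * a - 1) m 0)) u"
  note shift = rt_action_on_rtil_eigenvector[OF a m rep G1 G2 RR eig, folded g_def]
  note block = block_op_zv_eq_Qa[OF a m _ vector_space_axioms _ inv]
  have O_u: "block_op sc \<rho> \<kappa> a m (zv a \<epsilon>') u = sc (- (of_int \<epsilon>' * \<i>) * ?Q (int l + \<epsilon>')) g"
    if "\<epsilon>' \<in> {1, -1}" for \<epsilon>'
    by (rule block[OF that RR]) (simp_all add: l shift(1))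
  have "block_op sc \<rho> \<kappa> a m (zv a \<epsilon>) g = sc (- (of_int \<epsilon> * \<i>) * ?Q (- int l + \<epsilon>)) u"
    by (rule block[OF e RR]) (simp_all add: l shift(2))
  then have O_g: "block_op sc \<rho> \<kappa> a m (zv a \<epsilon>) g = sc (- (of_int \<epsilon> * \<i>) * ?Q (int l - \<epsilon>)) u"
    using Qf_uminus[of m _ _ "int l - \<epsilon>"] by (simp add: Qa_def)
  have "cis (real l * pi) = -1" using l by (simp flip: DeMoivre)
  then have "\<rho> (ft a m) u = - g"
    using shift(1)[of m] m by (simp add: ft_def)
  then show "block_op sc \<rho> \<kappa> a m (zv a \<epsilon>) u = sc (of_int \<epsilon> * \<i> * ?Q (int l + \<epsilon>)) (\<rho> (ft a m) u)"
    using O_u[OF e] by simp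
  have "gam (rt a m p) \<in> G" for p
    using gam_plane_root_mem(1)[OF _ _ G1 G2 RR] a by (auto simp: rt_eq_plane_root)
  moreover have "block_op sc \<rho> \<kappa> a m (zv a (- \<epsilon>)) u = sc (of_int \<epsilon> * \<i> * ?Q (int l - \<epsilon>)) g"
    using O_u[of "- \<epsilon>"] e by auto
  ultimately have "block_op sc \<rho> \<kappa> a m (zv a \<epsilon>) (block_op sc \<rho> \<kappa> a m (zv a (- \<epsilon>)) u)
      = sc (of_int \<epsilon> * \<i> * ?Q (int l - \<epsilon>) * (- (of_int \<epsilon> * \<i>) * ?Q (int l - \<epsilon>))) u"
    using O_g block_op_scale[OF rep] by simp
  also have "of_int \<epsilon> * \<i> * ?Q (int l - \<epsilon>) * (- (of_int \<epsilon> * \<i>) * ?Q (int l - \<epsilon>))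
      = of_real ((Qa \<kappa> a m (int l - \<epsilon>))\<^sup>2)"
    using e by (auto simp: power2_eq_square algebra_simps)
  finally show "block_op sc \<rho> \<kappa> a m (zv a \<epsilon>) (block_op sc \<rho> \<kappa> a m (zv a (- \<epsilon>)) u)
      = sc (of_real ((Qa \<kappa> a m (int l - \<epsilon>))\<^sup>2)) u" .
qed

theorem lemma5p5:
  fixes m1 m2 l1 l2 :: nat
    and \<kappa> :: "vec4 \<Rightarrow> real"
    and sc :: "complex \<Rightarrow> 'u::ab_group_add \<Rightarrow> 'u"
    and \<rho> :: "cl \<Rightarrow> 'u \<Rightarrow> 'u"
    and uu :: 'u
  assumes "0 < m1" and "0 < m2"
    and "W_invariant m1 m2 \<kappa>"
    and "is_rep sc (Wt m1 m2) \<rho>"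
    and "\<forall>v. \<rho> (clneg clone) v = - v"
    and "odd l1" and "1 \<le> l1" and "l1 \<le> 2 * m1 - 1"
    and "odd l2" and "1 \<le> l2" and "l2 \<le> 2 * m2 - 1"
    and "\<rho> (rtil 1 m1) uu = sc (exp (\<i> * pi / of_nat m1) ^ l1) uu"
    and "\<rho> (rtil 2 m2) uu = sc (exp (\<i> * pi / of_nat m2) ^ l2) uu"
  shows "\<forall>a\<in>{1::nat, 2}. \<forall>\<epsilon>\<in>{1::int, -1}.
           (let m = (if a = 1 then m1 else m2); l = (if a = 1 then l1 else l2) in
              Oop sc \<rho> \<kappa> m1 m2 (zv a \<epsilon>) uu
                = sc (of_int \<epsilon> * \<i> * complex_of_real (Qa \<kappa> a m (int l + \<epsilon>))) (\<rho> (ft a m) uu)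
            \<and> Oop sc \<rho> \<kappa> m1 m2 (zv a \<epsilon>) (Oop sc \<rho> \<kappa> m1 m2 (zv a (- \<epsilon>)) uu)
                = sc (complex_of_real ((Qa \<kappa> a m (int l - \<epsilon>))\<^sup>2)) uu)"
proof (intro ballI)
  fix a \<epsilon> assume a: "a \<in> {1::nat, 2}" and e: "\<epsilon> \<in> {1::int, -1}"
  define m where "m = (if a = 1 then m1 else m2)"
  define l where "l = (if a = 1 then l1 else l2)"
  have V: "vector_space sc" using assms(4) by (simp add: is_rep_def)
  have O: "Oop sc \<rho> \<kappa> m1 m2 (zv a \<epsilon>') v = block_op sc \<rho> \<kappa> a m (zv a \<epsilon>') v" for \<epsilon>' v
    using a by (auto simp: Oop_eq_block_op block_op_zv_other[OF V] m_def)
  have m: "0 < m" using assms(1,2) by (simp add: m_def)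
  have l: "odd l" using assms(6,9) by (simp add: l_def)
  have R: "rt a m p \<in> roots m1 m2" if "p \<in> {1..2 * m}" for p
    using that a unfolding roots_def m_def by auto
  have eig: "\<rho> (rtil a m) uu = sc (exp (\<i> * pi / of_nat m) ^ l) uu"
    using a assms(12,13) by (auto simp: m_def l_def)
  have inv: "\<forall>\<alpha>\<in>roots m1 m2. \<forall>\<beta>\<in>roots m1 m2. \<kappa> (refl \<beta> \<alpha>) = \<kappa> \<alpha>"
    using assms(3) by (simp add: W_invariant_def)
  note block = block_op_zv_rtil_eigenvector[OF a m l assms(4) Wt_one Wt_gen R inv eig e]
  show "let m = (if a = 1 then m1 else m2); l = (if a = 1 then l1 else l2) in
      Oop sc \<rho> \<kappa> m1 m2 (zv a \<epsilon>) uu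
        = sc (of_int \<epsilon> * \<i> * complex_of_real (Qa \<kappa> a m (int l + \<epsilon>))) (\<rho> (ft a m) uu)
      \<and> Oop sc \<rho> \<kappa> m1 m2 (zv a \<epsilon>) (Oop sc \<rho> \<kappa> m1 m2 (zv a (- \<epsilon>)) uu)
        = sc (complex_of_real ((Qa \<kappa> a m (int l - \<epsilon>))\<^sup>2)) uu"
    unfolding Let_def O m_def[symmetric] l_def[symmetric] using block by simp
qed

end
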